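(* In Algorithm MC (with $|b_j(v)|\le\deg(v)$ for all $v,j$ and $\alpha\in(0,1/4]$), for every round $i$, $v\in V$ and $j\in[k]$: if $\tilde\phi^i_{v,j}>0$ then $r^{\le i-1}_{v,j}\ge\frac{\ln n}{\alpha}$, and if $\tilde\phi^i_{v,j}<0$ then $r^{\le i-1}_{v,j}\le-\frac{\ln n}{\alpha}$.
   Context: Let $G=(V,E)$ be a unit-capacity undirected graph, $n=|V|\ge3$, every vertex of degree $\deg(v)\ge1$, each edge with a fixed arbitrary orientation; $B\in\mathbb R^{V\times E}$ is the incidence matrix (column $(u,v)$ has $+1$ in row $u$, $-1$ in row $v$, $0$ elsewhere). Algorithm MC takes $k\ge1$, $b=(b_1,\dots,b_k)\in\mathbb R^{V\times[k]}$ with $|b_j(v)|\le\deg(v)$ for all $v,j$, $\alpha\in(0,1/4]$ and an integer $T\ge1$. Set $w^1_{v,j,+}=w^1_{v,j,-}=1$. For $i=1,\dots,T$: (1) $\tilde w^i_{v,j,\circ}=w^i_{v,j,\circ}$ if $w^i_{v,j,\circ}\ge n$ and $0$ otherwise ($\circ\in\{+,-\}$); (2) $\tilde\phi^i_{v,j}=(\tilde w^i_{v,j,+}-\tilde w^i_{v,j,-})/\deg(v)$; (3) for each edge $(u,v)$ let $j^*$ maximize $|\tilde\phi^i_{u,j}-\tilde\phi^i_{v,j}|$ over $j\in[k]$ (ties arbitrary), set $f^i_{j^*}(u,v)=+1$ if $\tilde\phi^i_{u,j^*}>\tilde\phi^i_{v,j^*}$, $-1$ if $<$, $0$ otherwise,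 and $f^i_j(u,v)=0$ for $j\ne j^*$; (4) if $\sum_{j,v}\tilde\phi^i_{v,j}b_j(v)>\sum_{j,v}\tilde\phi^i_{v,j}(Bf^i_j)_v$, terminate; (5) $r^i_{v,j}=(b_j(v)-(Bf^i_j)_v)/\deg(v)$; (6) $w^{i+1}_{v,j,+}=w^i_{v,j,+}(1+\alpha r^i_{v,j})$, $w^{i+1}_{v,j,-}=w^i_{v,j,-}(1-\alpha r^i_{v,j})$. Write $r^{\le i}_{v,j}=\sum_{i'=1}^{i}r^{i'}_{v,j}$, with $r^{\le0}_{v,j}=0$. *)

theory Defs
  imports Complex_Main
begin

text \<open>Graph: finite vertex set V, finite edge set E (abstract edge type 'e, so parallel
  edges are allowed), each edge e oriented from src e to dst e (the fixed arbitrary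
  orientation).  Commodities are indexed by j in {1..k}; rounds by i in {1..T}.\<close>

definition deg :: "'e set \<Rightarrow> ('e \<Rightarrow> 'v) \<Rightarrow> ('e \<Rightarrow> 'v) \<Rightarrow> 'v \<Rightarrow> real" where
  "deg E src dst v = real (card {e \<in> E. src e = v \<or> dst e = v})"

definition inc :: "('e \<Rightarrow> 'v) \<Rightarrow> ('e \<Rightarrow> 'v) \<Rightarrow> 'v \<Rightarrow> 'e \<Rightarrow> real" where
  "inc src dst v e = (if v = src e then 1 else 0) - (if v = dst e then 1 else 0)"

definition Bmul :: "'e set \<Rightarrow> ('e \<Rightarrow> 'v) \<Rightarrow> ('e \<Rightarrow> 'v) \<Rightarrow> ('e \<Rightarrow> real) \<Rightarrow> 'v \<Rightarrow> real" where
  "Bmul E src dst g v = (\<Sum>e\<in>E. inc src dst v e * g e)"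

definition wtrunc :: "nat \<Rightarrow> real \<Rightarrow> real" where
  "wtrunc n x = (if x \<ge> real n then x else 0)"

definition phit :: "'v set \<Rightarrow> 'e set \<Rightarrow> ('e \<Rightarrow> 'v) \<Rightarrow> ('e \<Rightarrow> 'v)
    \<Rightarrow> ('v \<Rightarrow> nat \<Rightarrow> real) \<Rightarrow> ('v \<Rightarrow> nat \<Rightarrow> real) \<Rightarrow> 'v \<Rightarrow> nat \<Rightarrow> real" where
  "phit V E src dst wp wm v j =
     (wtrunc (card V) (wp v j) - wtrunc (card V) (wm v j)) / deg E src dst v"

text \<open>Arbitrary tie-breaking is modelled by quantifying over all
  selection functions returning a maximizer.\<close>
definition valid_sel :: "nat \<Rightarrow> 'e set \<Rightarrow> ('e \<Rightarrow> 'v) \<Rightarrow> ('e \<Rightarrow> 'v)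
    \<Rightarrow> (nat \<Rightarrow> ('v \<Rightarrow> nat \<Rightarrow> real) \<Rightarrow> 'e \<Rightarrow> nat) \<Rightarrow> bool" where
  "valid_sel k E src dst sel \<longleftrightarrow>
     (\<forall>i phi e. e \<in> E \<longrightarrow> sel i phi e \<in> {1..k} \<and>
        (\<forall>j\<in>{1..k}. \<bar>phi (src e) j - phi (dst e) j\<bar>
            \<le> \<bar>phi (src e) (sel i phi e) - phi (dst e) (sel i phi e)\<bar>))"

definition flow :: "('e \<Rightarrow> 'v) \<Rightarrow> ('e \<Rightarrow> 'v) \<Rightarrow> (nat \<Rightarrow> ('v \<Rightarrow> nat \<Rightarrow> real) \<Rightarrow> 'e \<Rightarrow> nat)
    \<Rightarrow> nat \<Rightarrow> ('v \<Rightarrow> nat \<Rightarrow> real) \<Rightarrow> nat \<Rightarrow> 'e \<Rightarrow> real" where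
  "flow src dst sel i phi j e =
     (if j = sel i phi e then
        (if phi (src e) j > phi (dst e) j then 1
         else if phi (src e) j < phi (dst e) j then -1 else 0)
      else 0)"

definition resid :: "'e set \<Rightarrow> ('e \<Rightarrow> 'v) \<Rightarrow> ('e \<Rightarrow> 'v) \<Rightarrow> ('v \<Rightarrow> nat \<Rightarrow> real)
    \<Rightarrow> (nat \<Rightarrow> ('v \<Rightarrow> nat \<Rightarrow> real) \<Rightarrow> 'e \<Rightarrow> nat) \<Rightarrow> nat \<Rightarrow> ('v \<Rightarrow> nat \<Rightarrow> real)
    \<Rightarrow> 'v \<Rightarrow> nat \<Rightarrow> real" where
  "resid E src dst b sel i phi v j =
     (b v j - Bmul E src dst (flow src dst sel i phi j) v) / deg E src dst v"

text \<open>MCw ... i = (w^{i+1}_+, w^{i+1}_-).\<close>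
primrec MCw :: "'v set \<Rightarrow> 'e set \<Rightarrow> ('e \<Rightarrow> 'v) \<Rightarrow> ('e \<Rightarrow> 'v) \<Rightarrow> ('v \<Rightarrow> nat \<Rightarrow> real)
    \<Rightarrow> real \<Rightarrow> (nat \<Rightarrow> ('v \<Rightarrow> nat \<Rightarrow> real) \<Rightarrow> 'e \<Rightarrow> nat) \<Rightarrow> nat
    \<Rightarrow> ('v \<Rightarrow> nat \<Rightarrow> real) \<times> ('v \<Rightarrow> nat \<Rightarrow> real)" where
  "MCw V E src dst b \<alpha> sel 0 = (\<lambda>v j. 1, \<lambda>v j. 1)"
| "MCw V E src dst b \<alpha> sel (Suc i) =
     (let wp = fst (MCw V E src dst b \<alpha> sel i);
          wm = snd (MCw V E src dst b \<alpha> sel i);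
          r = resid E src dst b sel (Suc i) (phit V E src dst wp wm)
      in (\<lambda>v j. wp v j * (1 + \<alpha> * r v j), \<lambda>v j. wm v j * (1 - \<alpha> * r v j)))"

definition phi_round where
  "phi_round V E src dst b \<alpha> sel i =
     phit V E src dst (fst (MCw V E src dst b \<alpha> sel (i - 1)))
                      (snd (MCw V E src dst b \<alpha> sel (i - 1)))"

definition r_round where
  "r_round V E src dst b \<alpha> sel i = resid E src dst b sel i (phi_round V E src dst b \<alpha> sel i)"

definition r_cum where
  "r_cum V E src dst b \<alpha> sel i v j = (\<Sum>i'\<in>{1..i}. r_round V E src dst b \<alpha> sel i' v j)"

definition terminates_at where
  "terminates_at V E src dst k b \<alpha> sel i \<longleftrightarrow>
     (let phi = phi_round V E src dst b \<alpha> sel i in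
      (\<Sum>j\<in>{1..k}. \<Sum>v\<in>V. phi v j * b v j)
        > (\<Sum>j\<in>{1..k}. \<Sum>v\<in>V. phi v j * Bmul E src dst (flow src dst sel i phi j) v))"

definition round_reached where
  "round_reached V E src dst k b \<alpha> sel T i \<longleftrightarrow>
     1 \<le> i \<and> i \<le> T \<and> (\<forall>i'\<in>{1..<i}. \<not> terminates_at V E src dst k b \<alpha> sel i')"

end

theory Submission
  imports Defs
begin

(* Each weight is a product of factors 1 + alpha r resp. 1 - alpha r with |alpha r| <= 1/2, so
   by 1 + x <= exp x it stays positive and below exp (alpha r_cum) resp. exp (- alpha r_cum).
   The sign of tilde phi tells which of the two weights survived the truncation, and a
   surviving weight is at least n; taking logarithms gives the bound on r_cum. *)

lemma Bmul_flow_abs_le_deg: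
  assumes "finite E"
  shows "\<bar>Bmul E src dst (flow src dst sel i phi j) v\<bar> \<le> deg E src dst v"
proof -
  have "\<bar>Bmul E src dst (flow src dst sel i phi j) v\<bar>
        \<le> (\<Sum>e\<in>E. \<bar>inc src dst v e * flow src dst sel i phi j e\<bar>)"
    unfolding Bmul_def by (rule sum_abs)
  also have "\<dots> \<le> (\<Sum>e\<in>E. if src e = v \<or> dst e = v then 1 else 0)"
    by (rule sum_mono) (auto simp: inc_def flow_def abs_mult)
  also have "\<dots> = deg E src dst v"
    using assms by (simp add: deg_def sum.If_cases Int_def conj_commute)
  finally show ?thesis .
qed

lemma resid_abs_le_2:
  assumes "finite E" and "deg E src dst v \<ge> 1" and "\<bar>b v j\<bar> \<le> deg E src dst v"
  shows "\<bar>resid E src dst b sel i phi v j\<bar> \<le> 2"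
proof -
  have "\<bar>b v j - Bmul E src dst (flow src dst sel i phi j) v\<bar> \<le> 2 * deg E src dst v"
    using Bmul_flow_abs_le_deg[OF assms(1), of src dst sel i phi j v] assms(3) by linarith
  then show ?thesis
    using assms(2) by (simp add: resid_def abs_divide pos_divide_le_eq)
qed

lemma multiplicative_weight_le_exp:
  fixes w r :: "nat \<Rightarrow> real"
  assumes "w 0 = 1"
    and "\<And>m. w (Suc m) = w m * (1 + c * r (Suc m))"
    and "\<And>m. 0 < 1 + c * r (Suc m)"
  shows "0 < w m \<and> w m \<le> exp (c * (\<Sum>i\<in>{1..m}. r i))"
proof (induction m)
  case 0
  then show ?case using assms(1) by simp
next
  case (Suc m)
  have "w m * (1 + c * r (Suc m)) \<le> exp (c * (\<Sum>i\<in>{1..m}. r i)) * exp (c * r (Suc m))"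
    using Suc.IH assms(3)[of m] exp_ge_add_one_self[of "c * r (Suc m)"]
    by (intro mult_mono) auto
  also have "\<dots> = exp (c * (\<Sum>i\<in>{1..Suc m}. r i))"
    by (simp add: exp_add[symmetric] distrib_left)
  finally show ?case
    using Suc.IH assms(2,3) by simp
qed

lemma MCw_Suc_components:
  "fst (MCw V E src dst b \<alpha> sel (Suc m)) v j
     = fst (MCw V E src dst b \<alpha> sel m) v j * (1 + \<alpha> * r_round V E src dst b \<alpha> sel (Suc m) v j)"
  "snd (MCw V E src dst b \<alpha> sel (Suc m)) v j
     = snd (MCw V E src dst b \<alpha> sel m) v j * (1 + - \<alpha> * r_round V E src dst b \<alpha> sel (Suc m) v j)"
  by (simp_all add: r_round_def phi_round_def Let_def)

lemma MCw_weights_le_exp: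
  assumes "finite E" and "deg E src dst v \<ge> 1" and "\<bar>b v j\<bar> \<le> deg E src dst v"
    and "0 < \<alpha>" and "\<alpha> \<le> 1/4"
  shows "0 < fst (MCw V E src dst b \<alpha> sel m) v j
       \<and> fst (MCw V E src dst b \<alpha> sel m) v j \<le> exp (\<alpha> * r_cum V E src dst b \<alpha> sel m v j)"
    and "0 < snd (MCw V E src dst b \<alpha> sel m) v j
       \<and> snd (MCw V E src dst b \<alpha> sel m) v j \<le> exp (- \<alpha> * r_cum V E src dst b \<alpha> sel m v j)"
proof -
  let ?r = "\<lambda>i. r_round V E src dst b \<alpha> sel i v j"
  have step_abs: "\<bar>\<alpha> * ?r i\<bar> \<le> 1/2" for i
  proof -
    have "\<bar>?r i\<bar> \<le> 2"
      unfolding r_round_def using resid_abs_le_2[of E src dst v b j, OF assms(1-3)] .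
    then have "\<alpha> * \<bar>?r i\<bar> \<le> (1/4) * 2"
      using assms(4,5) by (intro mult_mono) auto
    then show ?thesis
      using assms(4) by (simp add: abs_mult)
  qed
  have factor_pos: "0 < 1 + \<alpha> * ?r i" "\<alpha> * ?r i < 1" for i
    using step_abs[of i] by (auto simp: abs_le_iff)
  show "0 < fst (MCw V E src dst b \<alpha> sel m) v j
       \<and> fst (MCw V E src dst b \<alpha> sel m) v j \<le> exp (\<alpha> * r_cum V E src dst b \<alpha> sel m v j)"
    unfolding r_cum_def
    by (rule multiplicative_weight_le_exp[where w = "\<lambda>m. fst (MCw V E src dst b \<alpha> sel m) v j"])
      (simp_all add: MCw_Suc_components factor_pos del: MCw.simps(2))
  show "0 < snd (MCw V E src dst b \<alpha> sel m) v j
       \<and> snd (MCw V E src dst b \<alpha> sel m) v j \<le> exp (- \<alpha> * r_cum V E src dst b \<alpha> sel m v j)"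
    unfolding r_cum_def
    by (rule multiplicative_weight_le_exp[where w = "\<lambda>m. snd (MCw V E src dst b \<alpha> sel m) v j"])
      (simp_all add: MCw_Suc_components factor_pos del: MCw.simps(2))
qed

lemma wtrunc_diff_pos_imp_ge:
  assumes "0 < (wtrunc n x - wtrunc n y) / d" and "0 \<le> y" and "0 < d"
  shows "real n \<le> x"
  using assms by (auto simp: wtrunc_def zero_less_divide_iff split: if_splits)

lemma ln_div_le_of_le_exp:
  fixes n c R :: real
  assumes "0 < n" and "0 < c" and "n \<le> exp (c * R)"
  shows "ln n / c \<le> R"
proof -
  have "ln n \<le> c * R"
    using ln_le_cancel_iff[of n "exp (c * R)"] assms(1,3) by simp
  then show ?thesis
    using assms(2) by (simp add: divide_le_eq mult.commute)
qed

theorem lemma2p13: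
  fixes V :: "'v set" and E :: "'e set" and src dst :: "'e \<Rightarrow> 'v"
    and k T i :: nat and b :: "'v \<Rightarrow> nat \<Rightarrow> real" and \<alpha> :: real
    and sel :: "nat \<Rightarrow> ('v \<Rightarrow> nat \<Rightarrow> real) \<Rightarrow> 'e \<Rightarrow> nat"
    and v :: 'v and j :: nat
  assumes "finite V" and "finite E"
    and "\<forall>e\<in>E. src e \<in> V \<and> dst e \<in> V \<and> src e \<noteq> dst e"
    and "card V \<ge> 3"
    and "\<forall>u\<in>V. deg E src dst u \<ge> 1"
    and "k \<ge> 1"
    and "\<forall>u\<in>V. \<forall>j'\<in>{1..k}. \<bar>b u j'\<bar> \<le> deg E src dst u"
    and "0 < \<alpha>" and "\<alpha> \<le> 1/4"
    and "T \<ge> 1"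
    and "valid_sel k E src dst sel"
    and "round_reached V E src dst k b \<alpha> sel T i"
    and "v \<in> V" and "j \<in> {1..k}"
  shows "(phi_round V E src dst b \<alpha> sel i v j > 0 \<longrightarrow>
            r_cum V E src dst b \<alpha> sel (i - 1) v j \<ge> ln (real (card V)) / \<alpha>)
       \<and> (phi_round V E src dst b \<alpha> sel i v j < 0 \<longrightarrow>
            r_cum V E src dst b \<alpha> sel (i - 1) v j \<le> - ln (real (card V)) / \<alpha>)"
proof -
  define wp where "wp = fst (MCw V E src dst b \<alpha> sel (i - 1)) v j"
  define wm where "wm = snd (MCw V E src dst b \<alpha> sel (i - 1)) v j"
  define R where "R = r_cum V E src dst b \<alpha> sel (i - 1) v j"
  have deg: "deg E src dst v \<ge> 1" and "\<bar>b v j\<bar> \<le> deg E src dst v"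
    using assms(5,7,13,14) by auto
  note weights = MCw_weights_le_exp[of E src dst v b j, OF assms(2) this assms(8,9), of V sel "i - 1"]
  have wp: "0 < wp" "wp \<le> exp (\<alpha> * R)" and wm: "0 < wm" "wm \<le> exp (- \<alpha> * R)"
    using weights unfolding wp_def wm_def R_def by auto
  have phi: "phi_round V E src dst b \<alpha> sel i v j
               = (wtrunc (card V) wp - wtrunc (card V) wm) / deg E src dst v"
    by (simp add: phi_round_def phit_def wp_def wm_def)
  have n: "0 < real (card V)"
    using assms(4) by simp
  show ?thesis
  proof (intro conjI impI)
    assume "phi_round V E src dst b \<alpha> sel i v j > 0"
    then have "real (card V) \<le> exp (\<alpha> * R)"
      using wtrunc_diff_pos_imp_ge[of "card V" wp wm] phi deg wm wp(2) by fastforce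
    then show "ln (real (card V)) / \<alpha> \<le> r_cum V E src dst b \<alpha> sel (i - 1) v j"
      using ln_div_le_of_le_exp[OF n assms(8)] unfolding R_def by blast
  next
    assume "phi_round V E src dst b \<alpha> sel i v j < 0"
    then have "0 < (wtrunc (card V) wm - wtrunc (card V) wp) / deg E src dst v"
      unfolding phi by (auto simp: divide_less_0_iff zero_less_divide_iff)
    then have "real (card V) \<le> exp (\<alpha> * - R)"
      using wtrunc_diff_pos_imp_ge[of "card V" wm wp] deg wp wm(2) by fastforce
    then have "ln (real (card V)) / \<alpha> \<le> - R"
      by (rule ln_div_le_of_le_exp[OF n assms(8)])
    then show "r_cum V E src dst b \<alpha> sel (i - 1) v j \<le> - ln (real (card V)) / \<alpha>"
      unfolding R_def by simp
  qed
qed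

end
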